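(* Let $[n]=E_1\sqcup\cdots\sqcup E_r$ be a partition such that $\max E_i<\min E_{i+1}$ for $i=1,\dots,r-1$, and let $f:\{1,\dots,r\}\to\{2,3,\dots\}$ be a nondecreasing map. Let $\Delta$ be the simplicial complex on $[n]$ whose facets are exactly the sets $F\subseteq[n]$ such that (1) $|E_i-F|\le1$ for $i=1,\dots,r$, and (2) if $\min([n]-F)\in E_i$ then $|F|=n-f(i)$. Then $\Delta$ is shellable.
   Context: A simplicial complex is shellable if its facets can be ordered $F_1,\dots,F_q$ so that for each $k\ge2$, $(\bigcup_{i<k}2^{F_i})\cap 2^{F_k}$ is pure of dimension $\dim F_k-1$, where $2^F$ is the set of all subsets of $F$ (facets may have different dimensions). *)

theory Defs
  imports Main
begin

definition facets :: "'a set set \<Rightarrow> 'a set set" where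
  "facets K = {F \<in> K. \<forall>G\<in>K. F \<subseteq> G \<longrightarrow> G = F}"

text \<open>A complex K is pure of dimension d-1 if all its facets have exactly d elements
  (dimension of a face = cardinality minus one).\<close>
definition pure_card :: "'a set set \<Rightarrow> nat \<Rightarrow> bool" where
  "pure_card K d \<longleftrightarrow> (\<forall>F\<in>facets K. card F = d)"

text \<open>Shellability (non-pure version): an ordering F_1,...,F_q of the facets such that
  for every k \<ge> 2 the complex (\<Union>i<k. 2^{F_i}) \<inter> 2^{F_k} is pure of dimension dim F_k - 1.
  The list is 0-indexed here.\<close>
definition shellable :: "'a set set \<Rightarrow> bool" where
  "shellable \<Delta> \<longleftrightarrow>
     (\<exists>Fs. distinct Fs \<and> set Fs = facets \<Delta> \<and>
        (\<forall>k. 0 < k \<and> k < length Fs \<longrightarrow>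
           pure_card ((\<Union>i<k. Pow (Fs ! i)) \<inter> Pow (Fs ! k)) (card (Fs ! k) - 1)))"

end

(* List the facets in decreasing lexicographic order. This is a shelling as soon as, whenever a
   facet F comes after a facet F' and a is the least element of F - F' below which the two agree,
   some facet G with F - G = {a} comes before F. Such a G arises from F by trading a for larger
   elements. Let m = min([n] - F). If m < a, F' has the same minimal missing element and hence the
   same size as F, and one element w > a suffices: the missing element of the block of a if there
   is one, and otherwise any missing element above a, which exists because |F| = |F'|. If a < m,
   then a becomes the minimal missing element of G, so G must have size n - f(p) for the block p
   of a. Since p is at most the block i of m and f is nondecreasing with f >= 2, this is achieved
   by adding f(i) + 1 - f(p) >= 1 missing elements of F, including m. *)

theory Submission
  imports Defs
begin

definition lex_less :: "'a::wellorder set \<Rightarrow> 'a set \<Rightarrow> bool" where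
  "lex_less F G \<longleftrightarrow> (\<exists>a. a \<in> F \<and> a \<notin> G \<and> (\<forall>x<a. x \<in> F \<longleftrightarrow> x \<in> G))"

lemma lex_less_irrefl: "\<not> lex_less F F"
  unfolding lex_less_def by blast

lemma lex_less_trans:
  assumes "lex_less F G" "lex_less G H"
  shows "lex_less F H"
proof -
  obtain a where a: "a \<in> F" "a \<notin> G" "\<forall>x<a. x \<in> F \<longleftrightarrow> x \<in> G"
    using assms(1) unfolding lex_less_def by blast
  obtain b where b: "b \<in> G" "b \<notin> H" "\<forall>x<b. x \<in> G \<longleftrightarrow> x \<in> H"
    using assms(2) unfolding lex_less_def by blast
  have "a \<noteq> b" using a b by blast
  then consider "a < b" | "b < a" by fastforce
  then show ?thesis
  proof cases
    case 1
    then show ?thesis unfolding lex_less_def using a b by (intro exI[of _ a]) auto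
  next
    case 2
    then show ?thesis unfolding lex_less_def using a b by (intro exI[of _ b]) auto
  qed
qed

lemma lex_less_total:
  assumes "F \<noteq> G"
  shows "lex_less F G \<or> lex_less G F"
proof -
  obtain a where "(a \<in> F) \<noteq> (a \<in> G)" "\<forall>x<a. (x \<in> F) = (x \<in> G)"
    using assms exists_least_iff[of "\<lambda>x. (x \<in> F) \<noteq> (x \<in> G)"] by blast
  then show ?thesis unfolding lex_less_def by blast
qed

lemma lex_less_Diff_Un_above:
  assumes "a \<in> F" "\<forall>d\<in>D. a < d"
  shows "lex_less F (F - {a} \<union> D)"
  unfolding lex_less_def using assms by (intro exI[of _ a]) auto

lemma finite_has_minimal_wrt:
  assumes "finite S" "S \<noteq> {}" "irreflp R" "transp R"
  shows "\<exists>m\<in>S. \<forall>x\<in>S. \<not> R x m"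
  using assms(1,2)
proof (induction S rule: finite_ne_induct)
  case (singleton x)
  then show ?case using assms(3) by (auto dest: irreflpD)
next
  case (insert x S)
  then obtain m where m: "m \<in> S" "\<forall>y\<in>S. \<not> R y m" by blast
  show ?case
  proof (cases "R x m")
    case True
    then show ?thesis using m assms(3,4) by (metis insert_iff irreflpD transpD)
  next
    case False
    then show ?thesis using m by blast
  qed
qed

lemma finite_sorted_wrt_list:
  assumes "finite S" "irreflp R" "transp R"
    and total: "\<forall>x\<in>S. \<forall>y\<in>S. x \<noteq> y \<longrightarrow> R x y \<or> R y x"
  shows "\<exists>xs. distinct xs \<and> set xs = S \<and> sorted_wrt R xs"
  using assms(1) total
proof (induction "card S" arbitrary: S)
  case 0
  then show ?case by auto
next
  case (Suc c)
  then have "S \<noteq> {}" by auto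
  then obtain m where m: "m \<in> S" "\<forall>x\<in>S. \<not> R x m"
    using finite_has_minimal_wrt[OF Suc.prems(1) _ assms(2,3)] by blast
  have "c = card (S - {m})" using Suc.hyps(2) m(1) Suc.prems(1) by simp
  then obtain ys where ys: "distinct ys" "set ys = S - {m}" "sorted_wrt R ys"
    using Suc.hyps(1)[of "S - {m}"] Suc.prems by auto
  have "\<forall>y\<in>set ys. R m y" using ys(2) m Suc.prems(2) by auto
  then show ?case using ys m by (intro exI[of _ "m # ys"]) auto
qed

lemma pure_card_Int_Pow:
  assumes "finite F"
    and exchange: "\<And>j. j \<in> I \<Longrightarrow> \<exists>l\<in>I. \<exists>a\<in>F - G j. F - G l = {a}"
  shows "pure_card ((\<Union>i\<in>I. Pow (G i)) \<inter> Pow F) (card F - 1)"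
  unfolding pure_card_def
proof
  let ?K = "(\<Union>i\<in>I. Pow (G i)) \<inter> Pow F"
  fix H assume "H \<in> facets ?K"
  then have "H \<in> ?K" and H_max: "\<And>H'. H' \<in> ?K \<Longrightarrow> H \<subseteq> H' \<Longrightarrow> H' = H"
    unfolding facets_def by auto
  then obtain j where "j \<in> I" "H \<subseteq> G j" "H \<subseteq> F" by blast
  with exchange obtain l a where "l \<in> I" "a \<in> F - G j" "F - G l = {a}" by meson
  then have "F - {a} \<in> ?K" and "H \<subseteq> F - {a}"
    using \<open>H \<subseteq> G j\<close> \<open>H \<subseteq> F\<close> by blast+
  then have "H = F - {a}" using H_max by blast
  then show "card H = card F - 1" using \<open>a \<in> F - G j\<close> assms(1) by simp
qed

lemma shellableI:
  assumes "distinct Fs" "set Fs = facets \<Delta>" "\<forall>F\<in>facets \<Delta>. finite F"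
    and exchange: "\<And>j k. j < k \<Longrightarrow> k < length Fs \<Longrightarrow>
      \<exists>l<k. \<exists>a\<in>Fs ! k - Fs ! j. Fs ! k - Fs ! l = {a}"
  shows "shellable \<Delta>"
  unfolding shellable_def
proof (intro exI[of _ Fs] conjI allI impI)
  fix k assume k: "0 < k \<and> k < length Fs"
  then have "finite (Fs ! k)" using assms(2,3) nth_mem by blast
  moreover have "\<exists>l\<in>{..<k}. \<exists>a\<in>Fs ! k - Fs ! j. Fs ! k - Fs ! l = {a}" if "j \<in> {..<k}" for j
    using exchange[of j k] that k lessThan_iff by blast
  ultimately show "pure_card ((\<Union>i<k. Pow (Fs ! i)) \<inter> Pow (Fs ! k)) (card (Fs ! k) - 1)"
    by (rule pure_card_Int_Pow)
qed (use assms in auto)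

lemma shellable_if_lex_exchange:
  fixes \<Delta> :: "'a::wellorder set set"
  assumes "finite (facets \<Delta>)" "\<forall>F\<in>facets \<Delta>. finite F"
    and exchange: "\<And>F F'. F \<in> facets \<Delta> \<Longrightarrow> F' \<in> facets \<Delta> \<Longrightarrow> lex_less F F' \<Longrightarrow>
      \<exists>a\<in>F - F'. \<exists>G\<in>facets \<Delta>. lex_less F G \<and> F - G = {a}"
  shows "shellable \<Delta>"
proof -
  let ?R = "\<lambda>F G. lex_less G F"
  have "irreflp ?R" "transp ?R"
    by (auto intro: irreflpI transpI lex_less_trans simp: lex_less_irrefl)
  then obtain Fs where Fs: "distinct Fs" "set Fs = facets \<Delta>" "sorted_wrt ?R Fs"
    using finite_sorted_wrt_list[OF assms(1)] lex_less_total by metis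
  show ?thesis
  proof (rule shellableI[OF Fs(1,2) assms(2)])
    fix j k assume jk: "j < k" "k < length Fs"
    then have "lex_less (Fs ! k) (Fs ! j)" "Fs ! k \<in> facets \<Delta>" "Fs ! j \<in> facets \<Delta>"
      using Fs sorted_wrt_nth_less by fastforce+
    with exchange obtain a G where a: "a \<in> Fs ! k - Fs ! j" "Fs ! k - G = {a}"
      and G: "G \<in> facets \<Delta>" "lex_less (Fs ! k) G"
      by meson
    obtain l where l: "l < length Fs" "G = Fs ! l" using G(1) Fs(2) by (metis in_set_conv_nth)
    have "l < k"
    proof (rule ccontr)
      assume "\<not> l < k"
      then consider "l = k" | "k < l" by linarith
      then show False
      proof cases
        case 1
        then show False using G(2) l lex_less_irrefl by blast
      next
        case 2
        then have "lex_less (Fs ! l) (Fs ! k)" using Fs(3) l(1) sorted_wrt_nth_less by blast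
        then show False using G(2) l lex_less_irrefl lex_less_trans by blast
      qed
    qed
    then show "\<exists>l<k. \<exists>a\<in>Fs ! k - Fs ! j. Fs ! k - Fs ! l = {a}" using a l by blast
  qed
qed

lemma ex_not_mem_above_first_diff:
  fixes N :: "'a::linorder set"
  assumes "finite N" "F \<subseteq> N" "F' \<subseteq> N" "card F = card F'"
    and "a \<in> F" "a \<notin> F'" "\<forall>x<a. x \<in> F \<longleftrightarrow> x \<in> F'"
  shows "\<exists>w\<in>N - F. a < w"
proof (rule ccontr)
  assume "\<not> ?thesis"
  with assms(5-7) have "N - F \<subset> N - F'"
    using assms(2) by (auto simp: not_less order_le_less)
  then have "card (N - F) < card (N - F')"
    using assms(1) by (simp add: psubset_card_mono)
  then show False
    using assms(1-4) by (simp add: card_Diff_subset finite_subset)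
qed

lemma obtain_subset_with_card_containing:
  assumes "finite S" "x \<in> S" "1 \<le> k" "k \<le> card S"
  obtains D where "D \<subseteq> S" "x \<in> D" "card D = k"
proof -
  have "k - 1 \<le> card (S - {x})" using assms by simp
  then obtain D0 where "D0 \<subseteq> S - {x}" "card D0 = k - 1" "finite D0"
    by (meson obtain_subset_with_card_n)
  moreover have "x \<notin> D0" using calculation by blast
  ultimately have "insert x D0 \<subseteq> S" "card (insert x D0) = k" using assms(2,3) by auto
  then show thesis using that assms(2) by blast
qed

locale ordered_block_partition =
  fixes n r :: nat and E :: "nat \<Rightarrow> nat set" and f :: "nat \<Rightarrow> nat"
  assumes part_union: "(\<Union>i\<in>{1..r}. E i) = {1..n}"
    and part_disj: "\<And>i j. i \<in> {1..r} \<Longrightarrow> j \<in> {1..r} \<Longrightarrow> i \<noteq> j \<Longrightarrow> E i \<inter> E j = {}"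
    and part_ne: "\<And>i. i \<in> {1..r} \<Longrightarrow> E i \<noteq> {}"
    and part_order: "\<And>i. 1 \<le> i \<Longrightarrow> i < r \<Longrightarrow> Max (E i) < Min (E (Suc i))"
    and f_ge2: "\<And>i. i \<in> {1..r} \<Longrightarrow> 2 \<le> f i"
    and f_mono: "\<And>i j. 1 \<le> i \<Longrightarrow> i \<le> j \<Longrightarrow> j \<le> r \<Longrightarrow> f i \<le> f j"
begin

lemma block_subset: "i \<in> {1..r} \<Longrightarrow> E i \<subseteq> {1..n}"
  using part_union by blast

lemma finite_block: "i \<in> {1..r} \<Longrightarrow> finite (E i)"
  using block_subset finite_subset by blast

lemma ex_block:
  assumes "x \<in> {1..n}"
  obtains i where "i \<in> {1..r}" "x \<in> E i"
  using assms part_union by blast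

lemma block_unique: "i \<in> {1..r} \<Longrightarrow> j \<in> {1..r} \<Longrightarrow> x \<in> E i \<Longrightarrow> x \<in> E j \<Longrightarrow> i = j"
  using part_disj by blast

lemma Max_block_less_Min_block: "1 \<le> i \<Longrightarrow> i < j \<Longrightarrow> j \<le> r \<Longrightarrow> Max (E i) < Min (E j)"
proof (induction j)
  case 0
  then show ?case by simp
next
  case (Suc j)
  show ?case
  proof (cases "i = j")
    case True
    then show ?thesis using Suc.prems part_order by simp
  next
    case False
    then have j: "j \<in> {1..r}" using Suc.prems by simp
    have "Max (E i) < Min (E j)" using Suc False by simp
    also have "\<dots> \<le> Max (E j)" using finite_block[OF j] part_ne[OF j] by simp
    also have "\<dots> < Min (E (Suc j))" using Suc.prems j part_order by simp
    finally show ?thesis .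
  qed
qed

lemma block_less:
  assumes "i \<in> {1..r}" "j \<in> {1..r}" "i < j" "x \<in> E i" "y \<in> E j"
  shows "x < y"
proof -
  have "x \<le> Max (E i)" using assms finite_block by simp
  also have "\<dots> < Min (E j)" using assms Max_block_less_Min_block by simp
  also have "\<dots> \<le> y" using assms finite_block by simp
  finally show ?thesis .
qed

abbreviation gap :: "nat set \<Rightarrow> nat" where
  "gap F \<equiv> Min ({1..n} - F)"

definition admissible :: "nat set \<Rightarrow> bool" where
  "admissible F \<longleftrightarrow> F \<subseteq> {1..n} \<and> F \<noteq> {1..n} \<and> (\<forall>i\<in>{1..r}. card (E i - F) \<le> 1) \<and>
     (\<forall>i\<in>{1..r}. gap F \<in> E i \<longrightarrow> card F = n - f i)"

lemma admissible_subset: "admissible F \<Longrightarrow> F \<subseteq> {1..n}"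
  unfolding admissible_def by blast

lemma finite_admissible: "admissible F \<Longrightarrow> finite F"
  using admissible_subset finite_subset by blast

lemma admissible_card:
  "admissible F \<Longrightarrow> i \<in> {1..r} \<Longrightarrow> gap F \<in> E i \<Longrightarrow> card F = n - f i"
  unfolding admissible_def by blast

lemma admissible_block_Diff_unique:
  assumes "admissible F" "i \<in> {1..r}" "x \<in> E i - F" "y \<in> E i - F"
  shows "x = y"
proof -
  have "card (E i - F) \<le> Suc 0" using assms(1,2) unfolding admissible_def by simp
  then show ?thesis using assms(2-4) finite_block card_le_Suc0_iff_eq by blast
qed

lemma admissible_gapE:
  assumes "admissible F"
  obtains i where "i \<in> {1..r}" "gap F \<in> E i" "gap F \<in> {1..n} - F"
    "card F = n - f i"
proof -
  have "{1..n} - F \<noteq> {}" using assms unfolding admissible_def by blast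
  then have "gap F \<in> {1..n} - F" by (intro Min_in) simp_all
  with assms that show thesis unfolding admissible_def by (meson DiffD1 ex_block)
qed

lemma admissible_Diff_Un:
  assumes F: "admissible F" and a: "a \<in> F" "p \<in> {1..r}" "a \<in> E p"
    and D: "D \<subseteq> {1..n} - F" "a \<notin> D" "E p - F \<subseteq> D"
    and q: "q \<in> {1..r}" "gap (F - {a} \<union> D) \<in> E q" "card (F - {a} \<union> D) = n - f q"
  shows "admissible (F - {a} \<union> D)"
proof -
  let ?G = "F - {a} \<union> D"
  have "card (E j - ?G) \<le> 1" if j: "j \<in> {1..r}" for j
  proof (cases "j = p")
    case True
    then have "E j - ?G \<subseteq> {a}" using D by blast
    then show ?thesis using card_mono[of "{a}"] by fastforce
  next
    case False
    then have "E j - ?G \<subseteq> E j - F" using a j block_unique by blast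
    then have "card (E j - ?G) \<le> card (E j - F)" using j finite_block by (simp add: card_mono)
    also have "\<dots> \<le> 1" using F j unfolding admissible_def by blast
    finally show ?thesis .
  qed
  moreover have "card ?G = n - f j" if "j \<in> {1..r}" "gap ?G \<in> E j" for j
    using that q block_unique by blast
  moreover have "?G \<subseteq> {1..n}" "a \<in> {1..n} - ?G" using F a D unfolding admissible_def by auto
  ultimately show ?thesis unfolding admissible_def by blast
qed

lemma mem_if_less_gap:
  assumes "x \<in> {1..n}" "x < gap F"
  shows "x \<in> F"
  using assms Min_le[of "{1..n} - F" x] by fastforce

lemma exchange_element_above:
  assumes F: "admissible F" and F': "admissible F'" and "card F = card F'"
    and a: "a \<in> F" "a \<notin> F'" "\<forall>x<a. x \<in> F \<longleftrightarrow> x \<in> F'"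
    and p: "p \<in> {1..r}" "a \<in> E p"
  shows "\<exists>w\<in>{1..n} - F. a < w \<and> E p - F \<subseteq> {w}"
proof (cases "E p - F = {}")
  case True
  have "\<exists>w\<in>{1..n} - F. a < w"
    using ex_not_mem_above_first_diff[OF _ admissible_subset[OF F] admissible_subset[OF F']]
      assms(3) a by blast
  then show ?thesis using True by blast
next
  case False
  then obtain w where w: "w \<in> E p - F" by blast
  have "a < w"
  proof (rule ccontr)
    assume "\<not> a < w"
    moreover have "w \<noteq> a" using w a(1) by blast
    ultimately have "w < a" by simp
    then have "w \<in> E p - F'" using w a(3) by blast
    moreover have "a \<in> E p - F'" using a(2) p(2) by blast
    ultimately show False using admissible_block_Diff_unique[OF F' p(1)] \<open>w \<noteq> a\<close> by blast
  qed
  moreover have "E p - F \<subseteq> {w}" using w admissible_block_Diff_unique[OF F p(1)] by blast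
  ultimately show ?thesis using w block_subset[OF p(1)] by blast
qed

lemma exchange_if_gap_less:
  assumes F: "admissible F" and F': "admissible F'"
    and a: "a \<in> F" "a \<notin> F'" "\<forall>x<a. x \<in> F \<longleftrightarrow> x \<in> F'"
    and a_gap: "gap F < a"
  shows "\<exists>D. (\<forall>d\<in>D. a < d) \<and> admissible (F - {a} \<union> D)"
proof -
  define m where "m = gap F"
  obtain i where i: "i \<in> {1..r}" "m \<in> E i" "m \<in> {1..n} - F" "card F = n - f i"
    using admissible_gapE[OF F] unfolding m_def by blast
  have below_m: "y \<in> F" "y < a" if "y \<in> {1..n}" "y < m" for y
    using that a_gap mem_if_less_gap unfolding m_def by auto
  have "gap F' = m"
  proof (rule Min_eqI)
    show "m \<in> {1..n} - F'" using i(3) a(3) a_gap unfolding m_def by blast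
    show "m \<le> y" if y: "y \<in> {1..n} - F'" for y
      using y below_m[of y] a(3) by (meson DiffE not_le)
  qed simp
  then have "card F = card F'" using admissible_card[OF F' i(1)] i(2,4) by simp
  obtain p where p: "p \<in> {1..r}" "a \<in> E p"
    using a(1) admissible_subset[OF F] ex_block by blast
  obtain w where w: "w \<in> {1..n} - F" "a < w" "E p - F \<subseteq> {w}"
    using exchange_element_above[OF F F' \<open>card F = card F'\<close> a p] by blast
  let ?G = "F - {a} \<union> {w}"
  have "gap ?G = m"
  proof (rule Min_eqI)
    show "m \<in> {1..n} - ?G" using i(3) w(2) a_gap unfolding m_def by auto
    show "m \<le> y" if y: "y \<in> {1..n} - ?G" for y
      using y below_m[of y] by fastforce
  qed simp
  moreover have "card ?G = card F"
  proof -
    have "0 < card F" using a(1) finite_admissible[OF F] card_gt_0_iff by blast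
    then show ?thesis using a(1) w(1) finite_admissible[OF F] by (simp add: card_insert_if)
  qed
  ultimately have "admissible ?G"
    using admissible_Diff_Un[OF F a(1) p, of "{w}" i] w i by simp
  then show ?thesis using w(2) by blast
qed

lemma block_Diff_subset_gap:
  assumes F: "admissible F" and p: "p \<in> {1..r}" "a \<in> E p" and a_gap: "a < gap F"
  shows "E p - F \<subseteq> {gap F}"
proof
  define m where "m = gap F"
  obtain i where i: "i \<in> {1..r}" "m \<in> E i" "m \<in> {1..n} - F"
    using admissible_gapE[OF F] unfolding m_def by blast
  fix x assume x: "x \<in> E p - F"
  then have "m \<le> x" using block_subset[OF p(1)] unfolding m_def by (intro Min_le) auto
  moreover have "p = i" if "m < x"
    using block_less[OF p(1) i(1) _ x[THEN DiffD1] i(2)] block_less[OF i(1) p(1) _ i(2) p(2)]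
      that a_gap m_def by fastforce
  ultimately show "x \<in> {m}"
    using admissible_block_Diff_unique[OF F i(1), of x m] x i(2,3) by fastforce
qed

lemma exchange_if_less_gap:
  assumes F: "admissible F" and a: "a \<in> F" and a_gap: "a < gap F"
  shows "\<exists>D. (\<forall>d\<in>D. a < d) \<and> admissible (F - {a} \<union> D)"
proof -
  define m where "m = gap F"
  obtain i where i: "i \<in> {1..r}" "m \<in> E i" "m \<in> {1..n} - F" "card F = n - f i"
    using admissible_gapE[OF F] unfolding m_def by blast
  obtain p where p: "p \<in> {1..r}" "a \<in> E p"
    using a admissible_subset[OF F] ex_block by blast
  have "p \<le> i" using block_less[OF i(1) p(1) _ i(2) p(2)] a_gap m_def by fastforce
  then have f_pi: "2 \<le> f p" "f p \<le> f i" using f_ge2 f_mono p(1) i(1) by auto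
  have "0 < card F" using a finite_admissible[OF F] card_gt_0_iff by blast
  then have "f i < n" using i(4) by simp
  then have "card ({1..n} - F) = f i" using i(4) admissible_subset[OF F] finite_admissible[OF F]
    by (simp add: card_Diff_subset)
  then have "1 \<le> f i + 1 - f p" "f i + 1 - f p \<le> card ({1..n} - F)" using f_pi by simp_all
  then obtain D where D: "D \<subseteq> {1..n} - F" "m \<in> D" "card D = f i + 1 - f p"
    using obtain_subset_with_card_containing[OF finite_Diff[OF finite_atLeastAtMost] i(3)] by blast
  have D_above: "\<forall>d\<in>D. a < d"
    using D(1) a_gap Min_le[of "{1..n} - F"] by (fastforce intro: less_le_trans)
  let ?G = "F - {a} \<union> D"
  have "gap ?G = a"
  proof (rule Min_eqI)
    show "a \<in> {1..n} - ?G" using a admissible_subset[OF F] D_above by blast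
    show "a \<le> y" if y: "y \<in> {1..n} - ?G" for y
      using y mem_if_less_gap[of y F] a_gap by fastforce
  qed simp
  moreover have "card ?G = n - f p"
  proof -
    have "card ?G = card (F - {a}) + card D"
      using D(1) finite_admissible[OF F] by (intro card_Un_disjoint) (auto intro: finite_subset)
    also have "\<dots> = n - f p" using D(3) a i(4) f_pi \<open>f i < n\<close> finite_admissible[OF F] by simp
    finally show ?thesis .
  qed
  moreover have "a \<notin> D" "E p - F \<subseteq> D"
    using D_above D(2) block_Diff_subset_gap[OF F p a_gap] unfolding m_def by auto
  ultimately have "admissible ?G"
    using admissible_Diff_Un[OF F a p D(1) _ _ p(1)] p(2) by simp
  then show ?thesis using D_above by blast
qed

lemma lex_exchange:
  assumes F: "admissible F" and F': "admissible F'" and "lex_less F F'"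
  shows "\<exists>a\<in>F - F'. \<exists>G. admissible G \<and> lex_less F G \<and> F - G = {a}"
proof -
  obtain a where a: "a \<in> F" "a \<notin> F'" "\<forall>x<a. x \<in> F \<longleftrightarrow> x \<in> F'"
    using assms(3) unfolding lex_less_def by blast
  have "gap F \<noteq> a"
    using admissible_gapE[OF F] a(1) by (metis DiffD2)
  then consider "gap F < a" | "a < gap F" by linarith
  then obtain D where D: "\<forall>d\<in>D. a < d" "admissible (F - {a} \<union> D)"
    using exchange_if_gap_less[OF F F' a] exchange_if_less_gap[OF F a(1)] by cases blast+
  then have "lex_less F (F - {a} \<union> D)" "F - (F - {a} \<union> D) = {a}"
    using lex_less_Diff_Un_above[OF a(1)] a(1) by auto
  then show ?thesis using a D by blast
qed

end


theorem proposition3p2: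
  fixes n r :: nat and E :: "nat \<Rightarrow> nat set" and f :: "nat \<Rightarrow> nat"
    and \<Delta> :: "nat set set"
  assumes part_union: "(\<Union>i\<in>{1..r}. E i) = {1..n}"
    and part_disj: "\<forall>i\<in>{1..r}. \<forall>j\<in>{1..r}. i \<noteq> j \<longrightarrow> E i \<inter> E j = {}"
    and part_ne: "\<forall>i\<in>{1..r}. E i \<noteq> {}"
    and part_order: "\<forall>i. 1 \<le> i \<and> i < r \<longrightarrow> Max (E i) < Min (E (Suc i))"
    and f_ge2: "\<forall>i\<in>{1..r}. f i \<ge> 2"
    and f_mono: "\<forall>i j. 1 \<le> i \<and> i \<le> j \<and> j \<le> r \<longrightarrow> f i \<le> f j"
    and cplx_sub: "\<Delta> \<subseteq> Pow {1..n}"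
    and cplx_closed: "\<forall>G\<in>\<Delta>. \<forall>H. H \<subseteq> G \<longrightarrow> H \<in> \<Delta>"
    and cplx_facets: "facets \<Delta> =
       {F. F \<subseteq> {1..n} \<and> F \<noteq> {1..n} \<and>
           (\<forall>i\<in>{1..r}. card (E i - F) \<le> 1) \<and>
           (\<forall>i\<in>{1..r}. Min ({1..n} - F) \<in> E i \<longrightarrow> card F = n - f i)}"
  shows "shellable \<Delta>"
proof -
  \<comment> \<open>Shellability only involves the facets.\<close>
  interpret ordered_block_partition n r E f
    using part_union part_disj part_ne part_order f_ge2 f_mono by unfold_locales auto
  have facets: "facets \<Delta> = Collect admissible"
    using cplx_facets unfolding admissible_def by simp
  have "finite (facets \<Delta>)"
    using facets admissible_subset by (simp add: finite_subset[of _ "Pow {1..n}"] subset_iff)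
  then show ?thesis
    by (rule shellable_if_lex_exchange) (auto simp: facets finite_admissible dest: lex_exchange)
qed

end
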